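(* Fix $r\ge 2$ and $\epsilon>0$. For all sufficiently large $k$, in the random coloring of $[1,M_\epsilon]$ described in the context, the probability that there exists a bad $t$-term arithmetic progression in $[1,M_\epsilon]$ with common difference greater than $b$ is at most $\frac12$.
   Context: Ascending wave: positive integers $w_1<\dots<w_n$ with $w_{i+1}-w_i\ge w_i-w_{i-1}$ for $2\le i\le n-1$; $AW(k;r)$ is the least $N$ such that every $r$-coloring of $\{1,\dots,N\}$ has a monochromatic $k$-term ascending wave. Non-integer quantities used as integers are rounded down; $\log=\log_2$. Fix $r\ge2$, $\epsilon>0$, and $k$. Let $K=\lfloor k/(10(4r-4))\rfloor$, $b=AW(K;r-1)-1$, and $M_\epsilon=\lfloor k^{2r-1-\epsilon}/(2^{r-1}(40r)^{r^2-1})\rfloor$. For each $i\in\{0,\dots,r-1\}$ fix a coloring $\gamma_i$ of $\{1,\dots,b\}$ with colors from $\{0,\dots,r-1\}\setminus\{i\}$ having no monochromatic $K$-term ascending wave. Let $A$ be the $r^2\times 2r$ matrix with rows indexed by pairs $(j,i)$, $j\in\{0,\dots,r-1\}$, $i\in\{1,\dots,r\}$, whose row $(j,i)$ has entry $(m+j)\bmod r$ in position $2m+1$ and entry $(i+m-1+j)\bmod r$ in position $2m+2$, for $m=0,\dots,r-1$. Partition $[1,M_\epsilon]$ into consecutive blocks $B_1,B_2,\dots$ of $b$ integers each (the last possibly partial), and group the blocks into consecutive groups of $2r$ blocks. For each group independently, choose a row $(s_1,\dots,s_{2r})$ of $A$ uniformly at random, give the $l$-th block of the group the label $s_l$, and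 color it by $\gamma_{s_l}$ (translated to that block). An arithmetic progression $x_1<\dots<x_t$ is good if for every $c\in\{0,\dots,r-1\}$ there is a term $x_i$ lying in a block $B_j$ such that $B_j$ and $B_{j+1}$ both have label $c$; otherwise it is bad. Here $t=\frac{(4r-2)(2r+1)}{\log(r^2/(r^2-1))}\log k+\frac{(2r+1)(\log r+1)}{\log(r^2/(r^2-1))}$. *)

theory Defs
  imports "HOL-Probability.Probability"
begin

definition asc_wave :: "(nat \<Rightarrow> nat) \<Rightarrow> nat \<Rightarrow> bool" where
  "asc_wave w n \<longleftrightarrow> (\<forall>i<n. 0 < w i) \<and> (\<forall>i. i + 1 < n \<longrightarrow> w i < w (i + 1)) \<and>
     (\<forall>i. 1 \<le> i \<and> i + 1 < n \<longrightarrow> w i - w (i - 1) \<le> w (i + 1) - w i)"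

definition AW :: "nat \<Rightarrow> nat \<Rightarrow> nat" where
  "AW k r = (LEAST N. \<forall>c :: nat \<Rightarrow> nat. (\<forall>x\<in>{1..N}. c x < r) \<longrightarrow>
      (\<exists>w col. asc_wave w k \<and> (\<forall>i<k. w i \<in> {1..N} \<and> c (w i) = col)))"

definition K_of :: "nat \<Rightarrow> nat \<Rightarrow> nat" where
  "K_of r k = k div (10 * (4 * r - 4))"

definition b_of :: "nat \<Rightarrow> nat \<Rightarrow> nat" where
  "b_of r k = AW (K_of r k) (r - 1) - 1"

definition M_of :: "nat \<Rightarrow> real \<Rightarrow> nat \<Rightarrow> nat" where
  "M_of r \<epsilon> k = nat \<lfloor>real k powr (2 * real r - 1 - \<epsilon>) /
      (2 ^ (r - 1) * (40 * real r) ^ (r\<^sup>2 - 1))\<rfloor>"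

definition t_of :: "nat \<Rightarrow> nat \<Rightarrow> nat" where
  "t_of r k = nat \<lfloor>(4 * real r - 2) * (2 * real r + 1) / log 2 (real r ^ 2 / (real r ^ 2 - 1)) * log 2 (real k)
      + (2 * real r + 1) * (log 2 (real r) + 1) / log 2 (real r ^ 2 / (real r ^ 2 - 1))\<rfloor>"

text \<open>Rows of the matrix A: pairs (j,i) with j \<in> {0..r-1}, i \<in> {1..r}.\<close>
definition rows :: "nat \<Rightarrow> (nat \<times> nat) set" where
  "rows r = {0..<r} \<times> {1..r}"

text \<open>Entry of row (j,i) at 0-based position p (= paper position p+1):
  position 2m+1 (p = 2m) has (m+j) mod r, position 2m+2 (p = 2m+1) has (i+m-1+j) mod r.\<close>
definition row_entry :: "nat \<Rightarrow> nat \<times> nat \<Rightarrow> nat \<Rightarrow> nat" where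
  "row_entry r ji p = (case ji of (j, i) \<Rightarrow>
     if even p then (p div 2 + j) mod r else (i + p div 2 - 1 + j) mod r)"

text \<open>Blocks are indexed from 0: block q is {q*b+1 .. (q+1)*b} \<inter> [1,M].\<close>
definition block_of :: "nat \<Rightarrow> nat \<Rightarrow> nat" where
  "block_of b x = (x - 1) div b"

definition nblocks :: "nat \<Rightarrow> nat \<Rightarrow> nat" where
  "nblocks b M = (M + b - 1) div b"

definition ngroups :: "nat \<Rightarrow> nat \<Rightarrow> nat \<Rightarrow> nat" where
  "ngroups r b M = (nblocks b M + 2 * r - 1) div (2 * r)"

definition label :: "nat \<Rightarrow> (nat \<Rightarrow> nat \<times> nat) \<Rightarrow> nat \<Rightarrow> nat" where
  "label r \<sigma> q = row_entry r (\<sigma> (q div (2 * r))) (q mod (2 * r))"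

definition good_AP :: "nat \<Rightarrow> nat \<Rightarrow> nat \<Rightarrow> (nat \<Rightarrow> nat \<times> nat) \<Rightarrow> nat \<Rightarrow> nat \<Rightarrow> nat \<Rightarrow> bool" where
  "good_AP r b M \<sigma> t a d \<longleftrightarrow> (\<forall>c<r. \<exists>i<t.
      block_of b (a + i * d) + 1 < nblocks b M \<and>
      label r \<sigma> (block_of b (a + i * d)) = c \<and>
      label r \<sigma> (block_of b (a + i * d) + 1) = c)"

definition row_choice :: "nat \<Rightarrow> nat \<Rightarrow> nat \<Rightarrow> (nat \<Rightarrow> nat \<times> nat) pmf" where
  "row_choice r b M = Pi_pmf {..<ngroups r b M} (0, 1) (\<lambda>_. pmf_of_set (rows r))"

definition bad_event :: "nat \<Rightarrow> nat \<Rightarrow> nat \<Rightarrow> nat \<Rightarrow> (nat \<Rightarrow> nat \<times> nat) set" where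
  "bad_event r b M t = {\<sigma>. \<exists>a d. 1 \<le> a \<and> b < d \<and> a + (t - 1) * d \<le> M \<and>
      \<not> good_AP r b M \<sigma> t a d}"

end

theory Submission
  imports Defs
begin

(* A t-term progression with difference d > b visits a new block at every step,
   so its terms with indices 0, 2r+1, 2(2r+1), ... lie in blocks at least 2r+1 apart; the
   pairs of groups containing such a block q and its successor q+1 are therefore disjoint,
   and the rows chosen for them are independent. The matrix A is built so that every colour
   c occurs in some row at two adjacent positions; hence B_q and B_(q+1) both receive label c
   with probability at least 1/r^2 (if they straddle two groups, each of the two independent
   rows has c in the required column with probability at least 1/r). So a fixed progression
   misses colour c with probability at most (1 - 1/r^2)^((t-1) div (2r+1)), and a union bound
   over the at most M^2 progressions and r colours gives M^2 r (1 - 1/r^2)^((t-1) div (2r+1)).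
   With M <= k^(2r-1-eps) and the choice of t this is at most 1/2 once eps log k exceeds
   log(r^2/(r^2-1)).
   Blocks are nonempty (b >= 1) because AW(K; r-1) >= 2 for K >= 2; that AW is well defined at
   all follows from pigeonhole on the powers 2^0, ..., 2^(sK-1), any K of which form an
   ascending wave since their gaps at least double. *)

lemma prob_Pi_pmf_INT_disjoint_coords:
  fixes p :: "'i \<Rightarrow> 'a::countable pmf"
  assumes fin: "finite I" "finite J"
    and D_sub: "\<And>j. j \<in> J \<Longrightarrow> D j \<subseteq> I" and disj: "disjoint_family_on D J"
    and local: "\<And>j \<sigma> \<tau>. j \<in> J \<Longrightarrow> (\<And>i. i \<in> D j \<Longrightarrow> \<sigma> i = \<tau> i) \<Longrightarrow>
      \<sigma> \<in> F j \<longleftrightarrow> \<tau> \<in> F j"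
  shows "measure_pmf.prob (Pi_pmf I dflt p) (\<Inter>j\<in>J. F j) =
         (\<Prod>j\<in>J. measure_pmf.prob (Pi_pmf I dflt p) (F j))"
proof (cases "J = {}")
  case False
  let ?P = "measure_pmf (Pi_pmf I dflt p)"
  let ?X = "\<lambda>j \<omega>. restrict \<omega> (D j)"
  have indep: "prob_space.indep_vars ?P (\<lambda>j. PiM (D j) (\<lambda>_. count_space UNIV)) ?X J"
    using indep_vars_Pi_pmf[OF fin(1)] D_sub disj
    by (rule prob_space.indep_vars_restrict[OF measure_pmf.prob_space_axioms])
  have PiM_eq: "PiM (D j) (\<lambda>_. count_space UNIV) = count_space (PiE (D j) (\<lambda>_. UNIV :: 'a set))"
    if "j \<in> J" for j
    using D_sub[OF that] fin(1) by (intro count_space_PiM_finite) (auto intro: finite_subset)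
  have preimage: "?X j -` (?X j ` F j) = F j" if "j \<in> J" for j
  proof safe
    fix \<omega> \<tau> assume "\<tau> \<in> F j" "restrict \<omega> (D j) = restrict \<tau> (D j)"
    then show "\<omega> \<in> F j" using local[OF that, of \<omega> \<tau>] by (metis restrict_apply')
  qed auto
  have "measure_pmf.prob (Pi_pmf I dflt p) (\<Inter>j\<in>J. ?X j -` (?X j ` F j) \<inter> space ?P) =
        (\<Prod>j\<in>J. measure_pmf.prob (Pi_pmf I dflt p) (?X j -` (?X j ` F j) \<inter> space ?P))"
    using indep False fin(2)
    by (intro prob_space.indep_varsD_finite[OF measure_pmf.prob_space_axioms])
       (auto simp: PiM_eq)
  then show ?thesis
    by (simp add: preimage cong: INF_cong prod.cong)
qed simp

lemma prob_Pi_pmf_coord: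
  assumes "finite I" "g \<in> I"
  shows "measure_pmf.prob (Pi_pmf I dflt p) {\<sigma>. \<sigma> g \<in> A} = measure_pmf.prob (p g) A"
proof -
  have "measure_pmf.prob (Pi_pmf I dflt p) {\<sigma>. \<sigma> g \<in> A} =
        measure_pmf.prob (map_pmf (\<lambda>\<sigma>. \<sigma> g) (Pi_pmf I dflt p)) A"
    by (simp add: vimage_def)
  also have "map_pmf (\<lambda>\<sigma>. \<sigma> g) (Pi_pmf I dflt p) = p g"
    using assms by (simp add: Pi_pmf_component)
  finally show ?thesis .
qed

lemma prob_Pi_pmf_two_coords:
  assumes "finite I" "g \<in> I" "h \<in> I" "g \<noteq> h"
  shows "measure_pmf.prob (Pi_pmf I dflt p) {\<sigma>. \<sigma> g \<in> A \<and> \<sigma> h \<in> B} =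
         measure_pmf.prob (p g) A * measure_pmf.prob (p h) B"
proof -
  define C where "C x = (if x = g then A else if x = h then B else UNIV)" for x
  have "{\<sigma>. \<sigma> g \<in> A \<and> \<sigma> h \<in> B} = Pi I C"
    using assms by (auto simp: C_def Pi_def)
  moreover have "(\<Prod>x\<in>I. measure_pmf.prob (p x) (C x)) =
      measure_pmf.prob (p g) A * measure_pmf.prob (p h) B"
  proof -
    have "(\<Prod>x\<in>I. measure_pmf.prob (p x) (C x)) = (\<Prod>x\<in>{g, h}. measure_pmf.prob (p x) (C x))"
      using assms by (intro prod.mono_neutral_right) (auto simp: C_def)
    then show ?thesis
      using assms(4) by (simp add: C_def)
  qed
  ultimately show ?thesis
    using assms(1) by (simp add: measure_Pi_pmf_Pi)
qed

lemma asc_wave_if_doubling: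
  assumes pos: "\<And>i. i < n \<Longrightarrow> 0 < w i"
    and doubling: "\<And>i. i + 1 < n \<Longrightarrow> 2 * w i \<le> w (i + 1)"
  shows "asc_wave w n"
  unfolding asc_wave_def
proof (intro conjI allI impI)
  show "w i < w (i + 1)" if "i + 1 < n" for i
    using pos[of i] doubling[OF that] that by linarith
  show "w i - w (i - 1) \<le> w (i + 1) - w i" if "1 \<le> i \<and> i + 1 < n" for i
    using doubling[of i] that by linarith
qed (use pos in auto)

lemma monochromatic_asc_wave_in_powers_of_two:
  fixes c :: "nat \<Rightarrow> nat"
  assumes colouring: "\<forall>x\<in>{1..2 ^ (s * K)}. c x < s"
  shows "\<exists>w col. asc_wave w K \<and> (\<forall>i<K. w i \<in> {1..2 ^ (s * K)} \<and> c (w i) = col)"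
proof -
  have power_in_range: "(2::nat) ^ j \<in> {1..2 ^ (s * K)}" if "j < s * K" for j
    using that by (simp add: one_le_power power_increasing)
  have "c 1 < s"
    using colouring by (simp add: one_le_power)
  have "(\<lambda>j. c (2 ^ j)) \<in> {..<s * K} \<rightarrow> {..<s}"
    using colouring power_in_range by auto
  then obtain col where col_count: "s * K \<le> card ((\<lambda>j. c (2 ^ j)) -` {col} \<inter> {..<s * K}) * s"
    using pigeonhole_card[of "\<lambda>j. c (2 ^ j)" "{..<s * K}" "{..<s}"] \<open>c 1 < s\<close> by auto
  define S where "S = (\<lambda>j. c (2 ^ j)) -` {col} \<inter> {..<s * K}"
  have "K \<le> card S"
    using col_count \<open>c 1 < s\<close> by (simp add: S_def mult.commute)
  define xs where "xs = sorted_list_of_set S"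
  define w where "w i = (2::nat) ^ (xs ! i)" for i
  have "K \<le> length xs"
    using \<open>K \<le> card S\<close> by (simp add: xs_def S_def)
  then have xs_in_S: "xs ! i \<in> S" if "i < K" for i
    using that by (metis S_def finite_Int finite_lessThan nth_mem order.strict_trans2
        set_sorted_list_of_set xs_def)
  have "asc_wave w K"
  proof (rule asc_wave_if_doubling)
    show "2 * w i \<le> w (i + 1)" if "i + 1 < K" for i
    proof -
      have "xs ! i < xs ! (i + 1)"
        using \<open>K \<le> length xs\<close> that by (simp add: xs_def sorted_wrt_nth_less)
      then show ?thesis
        unfolding w_def by (metis Suc_leI power_Suc power_increasing one_le_numeral)
    qed
  qed (simp add: w_def)
  moreover have "w i \<in> {1..2 ^ (s * K)} \<and> c (w i) = col" if "i < K" for i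
    using xs_in_S[OF that] power_in_range by (auto simp: S_def w_def)
  ultimately show ?thesis by blast
qed

lemma AW_ge_2:
  assumes "1 \<le> s" "2 \<le> K"
  shows "2 \<le> AW K s"
proof -
  let ?P = "\<lambda>N. \<forall>c :: nat \<Rightarrow> nat. (\<forall>x\<in>{1..N}. c x < s) \<longrightarrow>
      (\<exists>w col. asc_wave w K \<and> (\<forall>i<K. w i \<in> {1..N} \<and> c (w i) = col))"
  have "?P (AW K s)"
    unfolding AW_def
    by (rule LeastI[of ?P "2 ^ (s * K)"]) (use monochromatic_asc_wave_in_powers_of_two in blast)
  then obtain w col where "asc_wave w K" "\<forall>i<K. w i \<in> {1..AW K s}"
    using \<open>1 \<le> s\<close> by (elim allE[of _ "\<lambda>_. 0"]) auto
  then have "1 \<le> w 0" "w 0 < w 1" "w 1 \<le> AW K s"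
    using \<open>2 \<le> K\<close> unfolding asc_wave_def by auto
  then show ?thesis by linarith
qed

lemma exists_add_mod_eq:
  fixes r :: nat
  assumes "c < r"
  shows "\<exists>j<r. (x + j) mod r = c"
proof (intro exI conjI)
  show "(c + (r - x mod r)) mod r < r" using assms by simp
  have "x mod r + (c + (r - x mod r)) = c + r"
    using assms mod_less_divisor[of r x] by linarith
  then show "(x + (c + (r - x mod r)) mod r) mod r = c"
    using assms by (metis mod_add_eq mod_add_self2 mod_less mod_mod_trivial)
qed

lemma finite_rows: "finite (rows r)"
  by (simp add: rows_def)

lemma card_rows: "card (rows r) = r * r"
  by (simp add: rows_def)

lemma rows_nonempty: "0 < r \<Longrightarrow> rows r \<noteq> {}"
  by (auto simp: rows_def)

lemma card_rows_with_entry_ge: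
  assumes "c < r"
  shows "r \<le> card {\<rho> \<in> rows r. row_entry r \<rho> p = c}"
proof -
  have "\<forall>i. \<exists>j<r. row_entry r (j, i) p = c"
    using exists_add_mod_eq[OF assms] by (auto simp: row_entry_def add.assoc)
  then obtain f where f: "\<And>i. f i < r \<and> row_entry r (f i, i) p = c"
    by metis
  have "r = card ((\<lambda>i. (f i, i)) ` {1..r})"
    by (subst card_image) (auto simp: inj_on_def)
  also have "\<dots> \<le> card {\<rho> \<in> rows r. row_entry r \<rho> p = c}"
    using f by (intro card_mono) (auto simp: rows_def)
  finally show ?thesis .
qed

lemma prob_row_entry_ge:
  assumes "c < r"
  shows "1 / r \<le> measure_pmf.prob (pmf_of_set (rows r)) {\<rho>. row_entry r \<rho> p = c}"
proof -
  have "1 / r = real r / (r * r)"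
    using assms by simp
  also have "\<dots> \<le> card {\<rho> \<in> rows r. row_entry r \<rho> p = c} / (r * r)"
    using card_rows_with_entry_ge[OF assms] by (intro divide_right_mono) auto
  also have "\<dots> = measure_pmf.prob (pmf_of_set (rows r)) {\<rho>. row_entry r \<rho> p = c}"
    using assms by (simp add: measure_pmf_of_set rows_nonempty finite_rows card_rows Int_def)
  finally show ?thesis .
qed

lemma row_with_equal_adjacent_entries:
  assumes "2 \<le> r" "c < r"
  shows "\<exists>\<rho>\<in>rows r. row_entry r \<rho> p = c \<and> row_entry r \<rho> (Suc p) = c"
proof (cases "even p")
  case True
  obtain j where "j < r" "(p div 2 + j) mod r = c"
    using exists_add_mod_eq[OF assms(2)] by blast
  with True assms(1) show ?thesis
    by (intro bexI[of _ "(j, 1)"]) (auto simp: row_entry_def rows_def)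
next
  case False
  obtain j where "j < r" "(Suc (p div 2) + j) mod r = c"
    using exists_add_mod_eq[OF assms(2)] by blast
  with False assms(1) show ?thesis
    by (intro bexI[of _ "(j, 2)"]) (auto simp: row_entry_def rows_def)
qed

lemma prob_adjacent_labels_ge:
  assumes r: "2 \<le> r" and c: "c < r" and I: "finite I" "q div (2 * r) \<in> I" "(q + 1) div (2 * r) \<in> I"
  shows "1 / (real r)\<^sup>2 \<le> measure_pmf.prob (Pi_pmf I dflt (\<lambda>_. pmf_of_set (rows r)))
           {\<sigma>. label r \<sigma> q = c \<and> label r \<sigma> (q + 1) = c}"
    (is "_ \<le> measure_pmf.prob ?P ?E")
proof -
  define g where "g = q div (2 * r)"
  define p where "p = q mod (2 * r)"
  show ?thesis
  proof (cases "Suc p = 2 * r")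
    case False
    then have next_block: "Suc q div (2 * r) = g" "Suc q mod (2 * r) = Suc p"
      by (simp_all add: div_Suc mod_Suc g_def p_def)
    obtain \<rho> where \<rho>: "\<rho> \<in> rows r" "row_entry r \<rho> p = c" "row_entry r \<rho> (Suc p) = c"
      using row_with_equal_adjacent_entries[OF r c] by blast
    have "1 / (real r)\<^sup>2 = measure_pmf.prob (pmf_of_set (rows r)) {\<rho>}"
      using \<rho>(1) r by (simp add: measure_pmf_of_set rows_nonempty finite_rows card_rows power2_eq_square)
    also have "\<dots> = measure_pmf.prob ?P {\<sigma>. \<sigma> g \<in> {\<rho>}}"
      using I unfolding g_def by (intro prob_Pi_pmf_coord[symmetric])
    also have "\<dots> \<le> measure_pmf.prob ?P ?E"
      using \<rho> next_block by (intro measure_pmf.finite_measure_mono) (auto simp: label_def g_def p_def)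
    finally show ?thesis .
  next
    case True
    then have next_block: "Suc q div (2 * r) = Suc g" "Suc q mod (2 * r) = 0"
      by (simp_all add: div_Suc mod_Suc g_def p_def)
    let ?row_entry_is = "\<lambda>p. {\<rho>. row_entry r \<rho> p = c}"
    have "1 / (real r)\<^sup>2 = 1 / r * (1 / r)"
      by (simp add: power2_eq_square)
    also have "\<dots> \<le> measure_pmf.prob (pmf_of_set (rows r)) (?row_entry_is p) *
                     measure_pmf.prob (pmf_of_set (rows r)) (?row_entry_is 0)"
      by (intro mult_mono prob_row_entry_ge[OF c]) auto
    also have "\<dots> = measure_pmf.prob ?P {\<sigma>. \<sigma> g \<in> ?row_entry_is p \<and> \<sigma> (Suc g) \<in> ?row_entry_is 0}"
      using I next_block unfolding g_def by (intro prob_Pi_pmf_two_coords[symmetric]) auto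
    also have "\<dots> \<le> measure_pmf.prob ?P ?E"
      using next_block by (intro measure_pmf.finite_measure_mono) (auto simp: label_def g_def p_def)
    finally show ?thesis .
  qed
qed

lemma block_of_add_ge:
  assumes "0 < b" "0 < x" "m * b \<le> y"
  shows "block_of b x + m \<le> block_of b (x + y)"
proof -
  have "block_of b x + m = (x - 1 + m * b) div b"
    using assms(1) by (simp add: block_of_def)
  also have "\<dots> \<le> block_of b (x + y)"
    using assms unfolding block_of_def by (intro div_le_mono) simp
  finally show ?thesis .
qed

lemma block_of_less_nblocks:
  assumes "0 < b" "0 < y" "y \<le> M"
  shows "block_of b y < nblocks b M"
proof -
  have "block_of b y < (M - 1) div b + 1"
    using assms unfolding block_of_def by (simp add: div_le_mono le_imp_less_Suc)
  also have "\<dots> = (M - 1 + b) div b"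
    using assms(1) by simp
  also have "\<dots> = nblocks b M"
    using assms(2,3) by (simp add: nblocks_def)
  finally show ?thesis .
qed

lemma group_less_ngroups:
  assumes "0 < r" "q < nblocks b M"
  shows "q div (2 * r) < ngroups r b M"
proof -
  have "q div (2 * r) < (nblocks b M - 1) div (2 * r) + 1"
    using assms by (simp add: div_le_mono le_imp_less_Suc)
  also have "\<dots> = (nblocks b M - 1 + 2 * r) div (2 * r)"
    using assms(1) by simp
  also have "\<dots> = ngroups r b M"
    using assms(2) by (simp add: ngroups_def)
  finally show ?thesis .
qed

lemma block_of_AP_gap:
  assumes "0 < b" "0 < a" "b < d" "i + m \<le> i'"
  shows "block_of b (a + i * d) + m \<le> block_of b (a + i' * d)"
proof -
  have "m * b \<le> (i' - i) * d"
    using assms by (intro mult_le_mono) auto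
  then have "block_of b (a + i * d) + m \<le> block_of b (a + i * d + (i' - i) * d)"
    using assms by (intro block_of_add_ge) auto
  also have "a + i * d + (i' - i) * d = a + i' * d"
    using assms(4) by (simp add: diff_mult_distrib mult_le_mono1)
  finally show ?thesis .
qed

lemma disjoint_family_on_group_pairs:
  fixes Q :: "'a::linorder \<Rightarrow> nat"
  assumes "0 < r" and spaced: "\<And>j j'. j < j' \<Longrightarrow> Q j + 2 * r + 1 \<le> Q j'"
  shows "disjoint_family_on (\<lambda>j. {Q j div (2 * r), (Q j + 1) div (2 * r)}) A"
proof -
  have "x < y" if "j < j'" "x \<in> {Q j div (2 * r), (Q j + 1) div (2 * r)}"
    "y \<in> {Q j' div (2 * r), (Q j' + 1) div (2 * r)}" for j j' x y
  proof -
    have "x \<le> (Q j + 1) div (2 * r)" "Q j' div (2 * r) \<le> y"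
      using that(2,3) div_le_mono[of "Q _" "Q _ + 1" "2 * r"] by auto
    moreover have "(Q j + 1) div (2 * r) < (Q j + 1 + 2 * r) div (2 * r)"
      using assms(1) by (subst div_add_self2) auto
    moreover have "(Q j + 1 + 2 * r) div (2 * r) \<le> Q j' div (2 * r)"
      using spaced[OF that(1)] by (intro div_le_mono) simp
    ultimately show ?thesis
      by linarith
  qed
  then show ?thesis
    unfolding disjoint_family_on_def by (metis disjoint_iff less_irrefl linorder_neq_iff)
qed

lemma prob_spaced_blocks_miss_colour_le:
  assumes r: "2 \<le> r" and c: "c < r"
    and in_range: "\<And>j. j < n \<Longrightarrow> Q j + 1 < nblocks b M"
    and spaced: "\<And>j j'. j < j' \<Longrightarrow> Q j + 2 * r + 1 \<le> Q j'"
  shows "measure_pmf.prob (row_choice r b M)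
           {\<sigma>. \<forall>j<n. \<not> (label r \<sigma> (Q j) = c \<and> label r \<sigma> (Q j + 1) = c)}
         \<le> (1 - 1 / (real r)\<^sup>2) ^ n"
proof -
  define I where "I = {..<ngroups r b M}"
  define D where "D j = {Q j div (2 * r), (Q j + 1) div (2 * r)}" for j
  define F where "F j = {\<sigma>. \<not> (label r \<sigma> (Q j) = c \<and> label r \<sigma> (Q j + 1) = c)}" for j
  let ?P = "Pi_pmf I (0, 1) (\<lambda>_. pmf_of_set (rows r))"
  have D_sub: "D j \<subseteq> I" if "j \<in> {..<n}" for j
    using in_range[of j] that r by (auto simp: D_def I_def intro!: group_less_ngroups)
  have disjoint: "disjoint_family_on D {..<n}"
    unfolding D_def using r spaced by (intro disjoint_family_on_group_pairs) auto
  have local: "\<sigma> \<in> F j \<longleftrightarrow> \<tau> \<in> F j" if "\<And>i. i \<in> D j \<Longrightarrow> \<sigma> i = \<tau> i" for j \<sigma> \<tau>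
    using that by (simp add: F_def D_def label_def)
  have F_prob: "measure_pmf.prob ?P (F j) \<le> 1 - 1 / (real r)\<^sup>2" if "j \<in> {..<n}" for j
  proof -
    have "measure_pmf.prob ?P (F j) =
          1 - measure_pmf.prob ?P {\<sigma>. label r \<sigma> (Q j) = c \<and> label r \<sigma> (Q j + 1) = c}"
      using measure_pmf.prob_compl[of "{\<sigma>. label r \<sigma> (Q j) = c \<and> label r \<sigma> (Q j + 1) = c}" ?P]
      by (simp add: F_def set_diff_eq)
    also have "\<dots> \<le> 1 - 1 / (real r)\<^sup>2"
      using D_sub[OF that]
      by (intro diff_left_mono prob_adjacent_labels_ge[OF r c]) (auto simp: D_def I_def)
    finally show ?thesis .
  qed
  have "{\<sigma>. \<forall>j<n. \<not> (label r \<sigma> (Q j) = c \<and> label r \<sigma> (Q j + 1) = c)} = (\<Inter>j\<in>{..<n}. F j)"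
    by (auto simp: F_def)
  then have "measure_pmf.prob (row_choice r b M)
      {\<sigma>. \<forall>j<n. \<not> (label r \<sigma> (Q j) = c \<and> label r \<sigma> (Q j + 1) = c)} =
      measure_pmf.prob ?P (\<Inter>j\<in>{..<n}. F j)"
    by (simp add: row_choice_def I_def)
  also have "\<dots> = (\<Prod>j<n. measure_pmf.prob ?P (F j))"
    by (rule prob_Pi_pmf_INT_disjoint_coords[OF _ _ D_sub disjoint local]) (simp_all add: I_def)
  also have "\<dots> \<le> (\<Prod>j<n. 1 - 1 / (real r)\<^sup>2)"
    using F_prob by (intro prod_mono) auto
  finally show ?thesis
    by simp
qed

definition AP_misses_colour ::
    "nat \<Rightarrow> nat \<Rightarrow> nat \<Rightarrow> (nat \<Rightarrow> nat \<times> nat) \<Rightarrow> nat \<Rightarrow> nat \<Rightarrow> nat \<Rightarrow> nat \<Rightarrow> bool" where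
  "AP_misses_colour r b M \<sigma> t a d c \<longleftrightarrow>
     (\<forall>i<t. \<not> (block_of b (a + i * d) + 1 < nblocks b M \<and>
               label r \<sigma> (block_of b (a + i * d)) = c \<and>
               label r \<sigma> (block_of b (a + i * d) + 1) = c))"

lemma not_good_AP_iff: "\<not> good_AP r b M \<sigma> t a d \<longleftrightarrow> (\<exists>c<r. AP_misses_colour r b M \<sigma> t a d c)"
  unfolding good_AP_def AP_misses_colour_def by blast

lemma prob_AP_misses_colour_le:
  assumes r: "2 \<le> r" and c: "c < r" and pos: "0 < b" "0 < a" and "b < d"
    and AP_le: "a + (t - 1) * d \<le> M"
  shows "measure_pmf.prob (row_choice r b M) {\<sigma>. AP_misses_colour r b M \<sigma> t a d c}
         \<le> (1 - 1 / (real r)\<^sup>2) ^ ((t - 1) div (2 * r + 1))"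
proof -
  define n where "n = (t - 1) div (2 * r + 1)"
  define Q where "Q j = block_of b (a + (2 * r + 1) * j * d)" for j
  have index_le: "(2 * r + 1) * j + 1 \<le> t - 1" if "j < n" for j
  proof -
    have "(2 * r + 1) * j + 1 \<le> (2 * r + 1) * Suc j"
      by simp
    also have "\<dots> \<le> (2 * r + 1) * n"
      using that by (intro mult_le_mono2) simp
    also have "\<dots> \<le> t - 1"
      unfolding n_def by (rule times_div_less_eq_dividend)
    finally show ?thesis .
  qed
  have in_range: "Q j + 1 < nblocks b M" if "j < n" for j
  proof -
    have last_term: "a + ((2 * r + 1) * j + 1) * d \<le> M"
      using index_le[OF that] AP_le by (meson add_left_mono le_trans mult_le_mono1)
    have "Q j + 1 \<le> block_of b (a + ((2 * r + 1) * j + 1) * d)"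
      unfolding Q_def using pos \<open>b < d\<close> by (intro block_of_AP_gap) auto
    also have "\<dots> < nblocks b M"
      using pos last_term by (intro block_of_less_nblocks) auto
    finally show ?thesis .
  qed
  have spaced: "Q j + 2 * r + 1 \<le> Q j'" if "j < j'" for j j'
  proof -
    have "(2 * r + 1) * j + (2 * r + 1) \<le> (2 * r + 1) * j'"
      using that by (metis Suc_leI mult_Suc_right mult_le_mono2 add.commute)
    then show ?thesis
      unfolding Q_def using pos \<open>b < d\<close> block_of_AP_gap by (metis add.assoc)
  qed
  have "\<forall>j<n. \<not> (label r \<sigma> (Q j) = c \<and> label r \<sigma> (Q j + 1) = c)"
    if "AP_misses_colour r b M \<sigma> t a d c" for \<sigma>
  proof (intro allI impI)
    fix j assume "j < n"
    then have "(2 * r + 1) * j < t"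
      using index_le by fastforce
    with that show "\<not> (label r \<sigma> (Q j) = c \<and> label r \<sigma> (Q j + 1) = c)"
      using in_range[OF \<open>j < n\<close>] unfolding AP_misses_colour_def Q_def by blast
  qed
  then have "{\<sigma>. AP_misses_colour r b M \<sigma> t a d c} \<subseteq>
        {\<sigma>. \<forall>j<n. \<not> (label r \<sigma> (Q j) = c \<and> label r \<sigma> (Q j + 1) = c)}"
    by blast
  then have "measure_pmf.prob (row_choice r b M) {\<sigma>. AP_misses_colour r b M \<sigma> t a d c}
      \<le> measure_pmf.prob (row_choice r b M)
          {\<sigma>. \<forall>j<n. \<not> (label r \<sigma> (Q j) = c \<and> label r \<sigma> (Q j + 1) = c)}"
    by (rule measure_pmf.finite_measure_mono) simp
  also have "\<dots> \<le> (1 - 1 / (real r)\<^sup>2) ^ n"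
    by (rule prob_spaced_blocks_miss_colour_le[OF r c in_range spaced])
  finally show ?thesis
    by (simp add: n_def)
qed

lemma prob_bad_event_le:
  assumes r: "2 \<le> r" and "0 < b" "2 \<le> t"
  shows "measure_pmf.prob (row_choice r b M) (bad_event r b M t)
         \<le> real M * real M * real r * (1 - 1 / (real r)\<^sup>2) ^ ((t - 1) div (2 * r + 1))"
proof -
  let ?q = "(1 - 1 / (real r)\<^sup>2) ^ ((t - 1) div (2 * r + 1))"
  define S where "S = {(a, d, c). 0 < a \<and> b < d \<and> a + (t - 1) * d \<le> M \<and> c < r}"
  define E where "E = (\<lambda>(a, d, c). {\<sigma>. AP_misses_colour r b M \<sigma> t a d c})"
  have d_le: "d \<le> (t - 1) * d" for d
    using \<open>2 \<le> t\<close> by (simp add: le_diff_conv2)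
  have "a \<le> M" "d \<le> M" if "a + (t - 1) * d \<le> M" for a d
    using that d_le[of d] by linarith+
  then have S_sub: "S \<subseteq> {1..M} \<times> {1..M} \<times> {..<r}"
    unfolding S_def by (auto simp: Suc_le_eq)
  then have "finite S"
    by (rule finite_subset) simp
  have "0 \<le> ?q"
    using r by (simp add: field_simps)
  have "bad_event r b M t \<subseteq> (\<Union>s\<in>S. E s)"
  proof
    fix \<sigma> assume "\<sigma> \<in> bad_event r b M t"
    then obtain a d c where "0 < a" "b < d" "a + (t - 1) * d \<le> M" "c < r"
      and "AP_misses_colour r b M \<sigma> t a d c"
      unfolding bad_event_def not_good_AP_iff by (auto simp: Suc_le_eq)
    then show "\<sigma> \<in> (\<Union>s\<in>S. E s)"
      unfolding S_def E_def by (intro UN_I[of "(a, d, c)"]) auto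
  qed
  then have "measure_pmf.prob (row_choice r b M) (bad_event r b M t)
      \<le> measure_pmf.prob (row_choice r b M) (\<Union>s\<in>S. E s)"
    by (rule measure_pmf.finite_measure_mono) simp
  also have "\<dots> \<le> (\<Sum>s\<in>S. measure_pmf.prob (row_choice r b M) (E s))"
    using \<open>finite S\<close> by (rule measure_pmf.finite_measure_subadditive_finite) simp
  also have "\<dots> \<le> card S * ?q"
  proof (rule sum_bounded_above)
    fix s assume "s \<in> S"
    then obtain a d c where "s = (a, d, c)" "0 < a" "b < d" "a + (t - 1) * d \<le> M" "c < r"
      unfolding S_def by blast
    then show "measure_pmf.prob (row_choice r b M) (E s) \<le> ?q"
      using prob_AP_misses_colour_le[OF r \<open>c < r\<close> \<open>0 < b\<close>] by (simp add: E_def)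
  qed
  also have "\<dots> \<le> real M * real M * real r * ?q"
  proof (rule mult_right_mono)
    have "card S \<le> card ({1..M} \<times> {1..M} \<times> {..<r})"
      using S_sub by (intro card_mono) simp_all
    then have "card S \<le> M * M * r"
      by (simp add: card_cartesian_product)
    then show "real (card S) \<le> real M * real M * real r"
      by (metis of_nat_le_iff of_nat_mult)
  qed fact
  finally show ?thesis .
qed

definition decay_rate :: "nat \<Rightarrow> real" where
  "decay_rate r = log 2 (real r ^ 2 / (real r ^ 2 - 1))"

lemma decay_rate_bounds:
  assumes "2 \<le> r"
  shows "0 < decay_rate r" "decay_rate r \<le> 1"
proof -
  have "4 \<le> real r ^ 2"
    using assms power_mono[of 2 "real r" 2] by simp
  then have "1 < real r ^ 2 / (real r ^ 2 - 1)" "real r ^ 2 / (real r ^ 2 - 1) \<le> 2"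
    by (simp_all add: field_simps)
  then show "0 < decay_rate r" "decay_rate r \<le> 1"
    by (simp_all add: decay_rate_def)
qed

lemma two_powr_neg_decay_rate:
  assumes "2 \<le> r"
  shows "2 powr (- decay_rate r) = 1 - 1 / (real r)\<^sup>2"
proof -
  have "1 < real r ^ 2"
    using assms power_mono[of 2 "real r" 2] by simp
  then have "0 < real r ^ 2 / (real r ^ 2 - 1)"
    using assms by (intro divide_pos_pos) auto
  then have "2 powr (- decay_rate r) = (real r ^ 2 - 1) / real r ^ 2"
    by (simp add: decay_rate_def powr_minus_divide)
  also have "\<dots> = 1 - 1 / (real r)\<^sup>2"
    using assms by (simp add: diff_divide_distrib)
  finally show ?thesis .
qed

lemma real_div_gt: "real m / real n - 1 < real (m div n)"
  by (metis floor_divide_of_nat_eq of_int_of_nat_eq real_of_int_floor_gt_diff_one)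

lemma t_of_bounds:
  assumes "2 \<le> r" "1 \<le> k"
  shows "2 \<le> t_of r k"
    and "(4 * real r - 2) * log 2 k + log 2 r + 1 - 2 * decay_rate r
         \<le> decay_rate r * real ((t_of r k - 1) div (2 * r + 1))"
proof -
  let ?L = "decay_rate r"
  define X where "X = (4 * real r - 2) * log 2 k + log 2 r + 1"
  define T where "T = (2 * real r + 1) * (X / ?L)"
  have L: "0 < ?L" "?L \<le> 1"
    using decay_rate_bounds[OF assms(1)] by auto
  have "T = (4 * real r - 2) * (2 * real r + 1) / ?L * log 2 k + (2 * real r + 1) * (log 2 r + 1) / ?L"
    by (simp add: T_def X_def add_divide_distrib ring_distribs)
  then have t_eq: "t_of r k = nat \<lfloor>T\<rfloor>"
    by (simp add: t_of_def decay_rate_def)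
  have "1 \<le> X"
    using assms by (simp add: X_def)
  then have "1 \<le> X / ?L"
    using L by (simp add: field_simps)
  moreover have "5 \<le> 2 * real r + 1"
    using assms by simp
  ultimately have "5 * 1 \<le> T"
    unfolding T_def by (intro mult_mono) auto
  then have "3 \<le> T"
    by simp
  then show t2: "2 \<le> t_of r k"
    unfolding t_eq by linarith
  have "X / ?L - 2 \<le> T / (2 * real r + 1) - 2 / (2 * real r + 1) - 1"
    using assms by (simp add: T_def)
  also have "\<dots> = (T - 2) / real (2 * r + 1) - 1"
    by (simp add: diff_divide_distrib add.commute)
  also have "\<dots> \<le> real (t_of r k - 1) / real (2 * r + 1) - 1"
    using t2 \<open>3 \<le> T\<close> unfolding t_eq by (intro diff_right_mono divide_right_mono) linarith+
  also have "\<dots> \<le> real ((t_of r k - 1) div (2 * r + 1))"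
    using real_div_gt less_imp_le by blast
  finally have "X / ?L - 2 \<le> real ((t_of r k - 1) div (2 * r + 1))" .
  then show "X - 2 * ?L \<le> ?L * real ((t_of r k - 1) div (2 * r + 1))"
    using L by (simp add: field_simps)
qed

lemma M_of_le: "real (M_of r \<epsilon> k) \<le> real k powr (2 * real r - 1 - \<epsilon>)"
proof -
  define X where "X = real k powr (2 * real r - 1 - \<epsilon>)"
  define D where "D = (2::real) ^ (r - 1) * (40 * real r) ^ (r\<^sup>2 - 1)"
  have "1 \<le> (40 * real r) ^ (r\<^sup>2 - 1)"
  proof (cases "r = 0")
    case False
    then show ?thesis
      by (intro one_le_power) simp
  qed simp
  then have "1 \<le> D"
    using mult_mono[of 1 "(2::real) ^ (r - 1)" 1] by (simp add: D_def)
  have "real (M_of r \<epsilon> k) \<le> X / D"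
    by (simp add: M_of_def X_def D_def)
  also have "\<dots> \<le> X"
    using \<open>1 \<le> D\<close> by (simp add: X_def divide_le_eq mult_le_cancel_left1)
  finally show ?thesis
    by (simp add: X_def)
qed

lemma union_bound_le_half:
  fixes \<rho> L \<epsilon> x M :: real and n :: nat
  assumes "1 \<le> \<rho>" "0 < \<epsilon>" "0 < L" and x: "2 powr (L / \<epsilon>) \<le> x"
    and M: "0 \<le> M" "M \<le> x powr (2 * \<rho> - 1 - \<epsilon>)"
    and n: "(4 * \<rho> - 2) * log 2 x + log 2 \<rho> + 1 - 2 * L \<le> L * n"
  shows "M * M * \<rho> * (2 powr (- L)) ^ n \<le> 1 / 2"
proof -
  define l where "l = log 2 x"
  have "0 < x"
    using x powr_gt_zero[of 2 "L / \<epsilon>"] by linarith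
  then have x_eq: "x = 2 powr l"
    by (simp add: l_def)
  have "L / \<epsilon> \<le> l"
    using x \<open>0 < x\<close> by (simp add: l_def le_log_iff)
  then have "L \<le> \<epsilon> * l"
    using \<open>0 < \<epsilon>\<close> by (simp add: pos_divide_le_eq mult.commute)
  have "M * M \<le> 2 powr ((2 * \<rho> - 1 - \<epsilon>) * l) * 2 powr ((2 * \<rho> - 1 - \<epsilon>) * l)"
    using M by (intro mult_mono) (simp_all add: x_eq powr_powr mult.commute)
  then have "M * M * \<rho> * (2 powr (- L)) ^ n
      \<le> 2 powr ((2 * \<rho> - 1 - \<epsilon>) * l) * 2 powr ((2 * \<rho> - 1 - \<epsilon>) * l) * 2 powr (log 2 \<rho>)
         * 2 powr (- L * n)"
    using \<open>1 \<le> \<rho>\<close> by (simp add: powr_realpow[symmetric] powr_powr mult_right_mono)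
  also have "\<dots> = 2 powr (2 * (2 * \<rho> - 1 - \<epsilon>) * l + log 2 \<rho> - L * n)"
    by (simp add: powr_add[symmetric] algebra_simps)
  also have "\<dots> \<le> 2 powr (-1)"
    using n \<open>L \<le> \<epsilon> * l\<close> by (intro powr_mono) (simp_all add: l_def algebra_simps)
  finally show ?thesis
    by (simp add: powr_minus_divide)
qed

lemma b_of_pos:
  assumes "2 \<le> r" "80 * (r - 1) \<le> k"
  shows "0 < b_of r k"
proof -
  have "10 * (4 * r - 4) = 40 * (r - 1)"
    by simp
  moreover have "2 \<le> k div (40 * (r - 1))"
    using assms by (subst less_eq_div_iff_mult_less_eq) simp_all
  ultimately have "2 \<le> K_of r k"
    by (simp add: K_of_def)
  then have "2 \<le> AW (K_of r k) (r - 1)"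
    using assms(1) by (intro AW_ge_2) simp_all
  then show ?thesis
    by (simp add: b_of_def)
qed

theorem lemma2p2:
  fixes r :: nat and \<epsilon> :: real
  assumes "r \<ge> 2" and "\<epsilon> > 0"
  shows "\<forall>\<^sub>F k in sequentially.
    measure_pmf.prob (row_choice r (b_of r k) (M_of r \<epsilon> k))
      (bad_event r (b_of r k) (M_of r \<epsilon> k) (t_of r k)) \<le> 1 / 2"
proof -
  let ?L = "decay_rate r"
  have "\<forall>\<^sub>F k in sequentially. 80 * (r - 1) \<le> k \<and> 2 powr (?L / \<epsilon>) \<le> real k"
    by (intro eventually_conj eventually_ge_at_top
        eventually_compose_filterlim[OF _ filterlim_real_sequentially])
  then show ?thesis
  proof (rule eventually_mono, elim conjE)
    fix k assume k: "80 * (r - 1) \<le> k" "2 powr (?L / \<epsilon>) \<le> real k"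
    then have "1 \<le> k"
      using powr_gt_zero[of 2 "?L / \<epsilon>"] by linarith
    let ?M = "real (M_of r \<epsilon> k)" and ?n = "(t_of r k - 1) div (2 * r + 1)"
    have "measure_pmf.prob (row_choice r (b_of r k) (M_of r \<epsilon> k))
        (bad_event r (b_of r k) (M_of r \<epsilon> k) (t_of r k)) \<le> ?M * ?M * r * (1 - 1 / (real r)\<^sup>2) ^ ?n"
      using assms(1) k(1) \<open>1 \<le> k\<close> by (intro prob_bad_event_le b_of_pos t_of_bounds)
    also have "\<dots> = ?M * ?M * r * (2 powr (- ?L)) ^ ?n"
      using assms(1) by (simp add: two_powr_neg_decay_rate)
    also have "\<dots> \<le> 1 / 2"
      using assms \<open>1 \<le> k\<close> k(2) decay_rate_bounds(1) t_of_bounds(2) M_of_le[of r \<epsilon> k]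
      by (intro union_bound_le_half) simp_all
    finally show "measure_pmf.prob (row_choice r (b_of r k) (M_of r \<epsilon> k))
        (bad_event r (b_of r k) (M_of r \<epsilon> k) (t_of r k)) \<le> 1 / 2" .
  qed
qed

end
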